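(* Let $n\ge1$, let $H\subseteq Q_n$ be any set of more than $2^{n-1}$ vertices, and let $C>0$. Then there exists $\beta\in H$ (depending on $C$) such that \[ \sqrt{n}\ \le\ C\cdot\#\{\gamma\in H:\gamma\to\beta\}+\frac{1}{C}\cdot\#\{\gamma\in H:\beta\to\gamma\}. \]
   Context: $Q_n=\{0,1\}^n$ is the boolean cube, viewed as a graph in which two vertices are adjacent iff they differ in exactly one coordinate. For $\gamma,\beta\in Q_n$ write $\gamma\to\beta$ if $\gamma$ and $\beta$ differ in exactly one coordinate $k$ and $\gamma_k=0$, $\beta_k=1$ (i.e. $\beta$ is obtained from $\gamma$ by changing a single $0$ to $1$). *)

theory Defs
  imports Complex_Main
begin

text \<open>The boolean cube Q_n: vertices are bool lists of length n (False = 0, True = 1).\<close>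
definition cube :: "nat \<Rightarrow> bool list set" where
  "cube n = {xs. length xs = n}"

definition up_edge :: "bool list \<Rightarrow> bool list \<Rightarrow> bool" where
  "up_edge g b \<longleftrightarrow> length g = length b \<and>
     (\<exists>k < length b. \<not> g ! k \<and> b ! k \<and> (\<forall>j < length b. j \<noteq> k \<longrightarrow> g ! j = b ! j))"

end

theory Submission
  imports Defs
begin

text \<open>Huang's signing of the edges of the cube gives a signed adjacency operator \<open>A\<close> on real
  functions of the vertices with \<open>A\<^sup>2 = n\<close>. Its \<open>sqrt n\<close>-eigenspace has dimension
  \<open>2\<^sup>n\<^sup>-\<^sup>1 < card H\<close>, so it contains some \<open>w \<noteq> 0\<close> vanishing outside \<open>H\<close>. Let \<open>\<beta> \<in> H\<close>
  maximise \<open>C\<^sup>|\<^sup>\<beta>\<^sup>| \<bar>w \<beta>\<bar>\<close>, where \<open>|\<beta>|\<close> is the number of ones. Then each neighbour of \<open>\<beta>\<close> in \<open>H\<close>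
  below \<open>\<beta>\<close> has \<open>\<bar>w\<bar> \<le> C \<bar>w \<beta>\<bar>\<close> and each one above has \<open>\<bar>w\<bar> \<le> \<bar>w \<beta>\<bar> / C\<close>, and the
  eigenvalue equation at \<open>\<beta>\<close> gives the bound.\<close>

section \<open>Flipping coordinates\<close>

definition flip :: "nat \<Rightarrow> bool list \<Rightarrow> bool list" where
  "flip k x = x[k := \<not> x ! k]"

lemma length_flip [simp]: "length (flip k x) = length x"
  by (simp add: flip_def)

lemma nth_flip: "i < length x \<Longrightarrow> flip k x ! i = (if i = k then \<not> x ! i else x ! i)"
  by (simp add: flip_def)

lemma flip_flip [simp]: "flip k (flip k x) = x"
  by (cases "k < length x") (auto simp: flip_def list_update_beyond)

lemma flip_commute: "flip j (flip k x) = flip k (flip j x)"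
  by (rule nth_equalityI) (auto simp: nth_flip)

lemma inj_on_flip: "inj_on (\<lambda>k. flip k x) {..<length x}"
proof (rule inj_onI)
  fix j k assume "j \<in> {..<length x}" "k \<in> {..<length x}" "flip j x = flip k x"
  then have "flip j x ! j = flip k x ! j" by simp
  with \<open>j \<in> {..<length x}\<close> show "j = k" by (auto simp: nth_flip split: if_splits)
qed

lemma flip_in_cube_iff [simp]: "flip k x \<in> cube n \<longleftrightarrow> x \<in> cube n"
  by (simp add: cube_def)

lemma up_edge_iff_flip: "up_edge g b \<longleftrightarrow> (\<exists>k < length g. \<not> g ! k \<and> b = flip k g)"
proof
  assume "up_edge g b"
  then obtain k where k: "length g = length b" "k < length b" "\<not> g ! k" "b ! k"
    "\<forall>j < length b. j \<noteq> k \<longrightarrow> g ! j = b ! j"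
    by (auto simp: up_edge_def)
  then have "b = flip k g" by (intro nth_equalityI) (auto simp: nth_flip)
  with k show "\<exists>k < length g. \<not> g ! k \<and> b = flip k g" by auto
qed (auto simp: up_edge_def nth_flip)

lemma up_neighbours_eq:
  "{g \<in> H. up_edge b g} = (\<lambda>k. flip k b) ` {k. k < length b \<and> \<not> b ! k \<and> flip k b \<in> H}"
  by (auto simp: up_edge_iff_flip)

lemma down_neighbours_eq:
  "{g \<in> H. up_edge g b} = (\<lambda>k. flip k b) ` {k. k < length b \<and> b ! k \<and> flip k b \<in> H}"
proof -
  have "up_edge g b \<longleftrightarrow> (\<exists>k < length b. b ! k \<and> g = flip k b)" for g
    unfolding up_edge_iff_flip by (metis flip_flip length_flip nth_flip)
  then show ?thesis by auto
qed

lemma card_up_neighbours: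
  "card {g \<in> H. up_edge b g} = card {k. k < length b \<and> \<not> b ! k \<and> flip k b \<in> H}"
  unfolding up_neighbours_eq
  by (rule card_image, rule inj_on_subset[OF inj_on_flip]) auto

lemma card_down_neighbours:
  "card {g \<in> H. up_edge g b} = card {k. k < length b \<and> b ! k \<and> flip k b \<in> H}"
  unfolding down_neighbours_eq
  by (rule card_image, rule inj_on_subset[OF inj_on_flip]) auto

lemma count_list_flip_up:
  "k < length x \<Longrightarrow> \<not> x ! k \<Longrightarrow> count_list (flip k x) True = Suc (count_list x True)"
proof (induction x arbitrary: k)
  case (Cons a x)
  then show ?case by (cases k) (auto simp: flip_def)
qed simp

lemma neg_one_power_count_flip:
  assumes "k < length x"
  shows "(-1::real) ^ count_list (flip k x) True = - ((-1) ^ count_list x True)"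
proof (cases "x ! k")
  case True
  have "count_list x True = Suc (count_list (flip k x) True)"
    using count_list_flip_up[of k "flip k x"] assms True by (simp add: nth_flip)
  then show ?thesis by simp
qed (simp add: assms count_list_flip_up)

lemma card_cube: "card (cube n) = 2 ^ n"
  using card_lists_length_eq[of "UNIV :: bool set" n] by (simp add: cube_def)

lemma finite_cube: "finite (cube n)"
  using finite_lists_length_eq[of "UNIV :: bool set" n] by (simp add: cube_def)

lemma card_cube_first_False: "card {x \<in> cube (Suc m). \<not> x ! 0} = 2 ^ m"
proof -
  have "{x \<in> cube (Suc m). \<not> x ! 0} = Cons False ` cube m"
    by (auto simp: cube_def length_Suc_conv)
  then show ?thesis by (simp add: card_image card_cube)
qed


section \<open>Huang's signed adjacency operator\<close>

text \<open>The two paths around any square of the cube then get opposite signs,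
  so the off-diagonal terms of \<open>A\<^sup>2\<close> cancel.\<close>

definition huang_sign :: "bool list \<Rightarrow> nat \<Rightarrow> real" where
  "huang_sign x k = (-1) ^ count_list (take k x) True"

definition signed_adjacency :: "(bool list \<Rightarrow> real) \<Rightarrow> bool list \<Rightarrow> real" where
  "signed_adjacency u x = (\<Sum>k < length x. huang_sign x k * u (flip k x))"

lemma huang_sign_square [simp]: "huang_sign x k * huang_sign x k = 1"
  by (simp add: huang_sign_def flip: power_add)

lemma abs_huang_sign [simp]: "\<bar>huang_sign x k\<bar> = 1"
  by (simp add: huang_sign_def)

lemma huang_sign_flip_le: "j \<le> k \<Longrightarrow> huang_sign (flip k x) j = huang_sign x j"
  by (simp add: huang_sign_def flip_def)

lemma huang_sign_flip_less:
  assumes "k < j" "k < length x"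
  shows "huang_sign (flip k x) j = - huang_sign x j"
proof -
  have "take j (flip k x) = flip k (take j x)"
    using assms(1) by (simp add: flip_def take_update_swap)
  then show ?thesis
    using assms neg_one_power_count_flip[of k "take j x"] by (simp add: huang_sign_def)
qed

lemma huang_sign_anticommute:
  assumes "j \<noteq> k" "j < length x" "k < length x"
  shows "huang_sign x k * huang_sign (flip k x) j = - (huang_sign x j * huang_sign (flip j x) k)"
  using assms by (cases "k < j") (simp_all add: huang_sign_flip_less huang_sign_flip_le)

lemma sum_antisymmetric_eq_0:
  fixes G :: "'a \<Rightarrow> 'a \<Rightarrow> real"
  assumes "\<And>j k. j \<in> A \<Longrightarrow> k \<in> A \<Longrightarrow> G j k = - G k j"
  shows "(\<Sum>j\<in>A. \<Sum>k\<in>A. G j k) = 0"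
proof -
  have "(\<Sum>j\<in>A. \<Sum>k\<in>A. G j k) = (\<Sum>k\<in>A. \<Sum>j\<in>A. G j k)"
    by (rule sum.swap)
  also have "\<dots> = (\<Sum>k\<in>A. \<Sum>j\<in>A. - G k j)"
    by (intro sum.cong refl assms)
  also have "\<dots> = - (\<Sum>k\<in>A. \<Sum>j\<in>A. G k j)"
    by (simp add: sum_negf)
  finally show ?thesis by simp
qed

lemma signed_adjacency_square:
  "signed_adjacency (signed_adjacency u) x = real (length x) * u x"
proof -
  let ?n = "length x"
  define G where "G k j = (if j = k then 0
      else huang_sign x k * huang_sign (flip k x) j * u (flip j (flip k x)))" for k j
  have "signed_adjacency (signed_adjacency u) x
      = (\<Sum>k < ?n. \<Sum>j < ?n. huang_sign x k * huang_sign (flip k x) j * u (flip j (flip k x)))"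
    by (simp add: signed_adjacency_def sum_distrib_left mult.assoc)
  also have "\<dots> = (\<Sum>k < ?n. \<Sum>j < ?n. (if j = k then u x else 0) + G k j)"
    by (intro sum.cong refl) (auto simp: G_def huang_sign_flip_le)
  also have "\<dots> = real ?n * u x + (\<Sum>k < ?n. \<Sum>j < ?n. G k j)"
    by (simp add: sum.distrib)
  also have "(\<Sum>k < ?n. \<Sum>j < ?n. G k j) = 0"
  proof (rule sum_antisymmetric_eq_0)
    fix k j assume "k \<in> {..<?n}" "j \<in> {..<?n}"
    then show "G k j = - G j k"
      using huang_sign_anticommute[of j k x] by (auto simp: G_def flip_commute)
  qed
  finally show ?thesis by simp
qed

lemma signed_adjacency_shift:
  assumes "c\<^sup>2 = real (length x)"
  shows "signed_adjacency (\<lambda>y. signed_adjacency u y + c * u y) x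
           = c * (signed_adjacency u x + c * u x)"
proof -
  have "signed_adjacency (\<lambda>y. signed_adjacency u y + c * u y) x
          = signed_adjacency (signed_adjacency u) x + c * signed_adjacency u x"
    by (simp add: signed_adjacency_def sum.distrib sum_distrib_left algebra_simps)
  then show ?thesis
    using assms by (simp add: signed_adjacency_square algebra_simps power2_eq_square)
qed

lemma signed_adjacency_first_True:
  assumes "x \<noteq> []" "x ! 0"
    and "\<And>y. length y = length x \<Longrightarrow> y ! 0 \<Longrightarrow> u y = 0"
  shows "signed_adjacency u x = u (flip 0 x)"
proof -
  obtain m where m: "length x = Suc m"
    using assms(1) by (cases x) auto
  have "u (flip (Suc k) x) = 0" for k
    using assms m by (intro assms(3)) (simp_all add: nth_flip)
  then show ?thesis
    unfolding signed_adjacency_def m sum.lessThan_Suc_shift by (simp add: huang_sign_def)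
qed


section \<open>Homogeneous linear systems\<close>

definition linear_functional :: "(('a \<Rightarrow> real) \<Rightarrow> real) \<Rightarrow> bool" where
  "linear_functional \<phi> \<longleftrightarrow>
     (\<forall>u v. \<phi> (\<lambda>x. u x + v x) = \<phi> u + \<phi> v) \<and> (\<forall>c u. \<phi> (\<lambda>x. c * u x) = c * \<phi> u)"

lemma linear_functional_add:
  "linear_functional \<phi> \<Longrightarrow> \<phi> (\<lambda>x. u x + v x) = \<phi> u + \<phi> v"
  unfolding linear_functional_def by blast

lemma linear_functional_scale:
  "linear_functional \<phi> \<Longrightarrow> \<phi> (\<lambda>x. c * u x) = c * \<phi> u"
  unfolding linear_functional_def by blast

lemma linear_functional_add_scaled:
  "linear_functional \<phi> \<Longrightarrow> \<phi> (\<lambda>x. u x + c * v x) = \<phi> u + c * \<phi> v"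
  using linear_functional_add[of \<phi> u "\<lambda>x. c * v x"] linear_functional_scale by simp

lemma linear_functional_zero: "linear_functional \<phi> \<Longrightarrow> \<phi> (\<lambda>x. 0) = 0"
  using linear_functional_scale[of \<phi> 0 "\<lambda>x. 0"] by simp

lemma linear_functional_expand:
  assumes "linear_functional \<phi>" "finite V" "\<And>x. x \<notin> V \<Longrightarrow> u x = 0"
  shows "\<phi> u = (\<Sum>v\<in>V. u v * \<phi> (\<lambda>x. if x = v then 1 else 0))"
  using assms(2,3)
proof (induction V arbitrary: u rule: finite_induct)
  case empty
  then have "u = (\<lambda>x. 0)" by auto
  then show ?case using linear_functional_zero[OF assms(1)] by simp
next
  case (insert a V)
  define u' where "u' x = (if x = a then 0 else u x)" for x
  have "u = (\<lambda>x. u' x + u a * (if x = a then 1 else 0))"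
    by (auto simp: u'_def)
  then have "\<phi> u = \<phi> u' + u a * \<phi> (\<lambda>x. if x = a then 1 else 0)"
    using linear_functional_add_scaled[OF assms(1)] by metis
  moreover have "\<phi> u' = (\<Sum>v\<in>V. u v * \<phi> (\<lambda>x. if x = v then 1 else 0))"
    using insert by (subst insert.IH) (auto simp: u'_def intro!: sum.cong)
  ultimately show ?case using insert by simp
qed

lemma exists_nonzero_common_zero:
  assumes "finite I" "finite V" "card I < card V"
    and "\<And>i. i \<in> I \<Longrightarrow> linear_functional (\<phi> i)"
  shows "\<exists>u. (\<forall>x. x \<notin> V \<longrightarrow> u x = 0) \<and> (\<exists>v\<in>V. u v \<noteq> 0) \<and> (\<forall>i\<in>I. \<phi> i u = 0)"
  using assms
proof (induction I arbitrary: V \<phi> rule: finite_induct)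
  case empty
  then obtain v where "v \<in> V" by fastforce
  then show ?case by (intro exI[of _ "\<lambda>x. if x = v then 1 else 0"]) auto
next
  case (insert i I)
  show ?case
  proof (cases "\<exists>v\<in>V. \<phi> i (\<lambda>x. if x = v then 1 else 0) \<noteq> 0")
    case True
    then obtain v0 where v0: "v0 \<in> V" "\<phi> i (\<lambda>x. if x = v0 then 1 else 0) \<noteq> 0" by blast
    define \<delta> where "\<delta> = (\<lambda>x. if x = v0 then 1 else (0::real))"
    define correct where "correct u = (\<lambda>x. u x - \<phi> i u / \<phi> i \<delta> * \<delta> x)" for u
    have lin_i: "linear_functional (\<phi> i)"
      using insert.prems(3) by simp
    have killed: "\<phi> i (correct u) = 0" for u
      using linear_functional_add_scaled[OF lin_i, of u "- \<phi> i u / \<phi> i \<delta>" \<delta>] v0(2)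
      by (simp add: correct_def \<delta>_def)
    have correct_add: "correct (\<lambda>x. u x + v x) = (\<lambda>x. correct u x + correct v x)" for u v
      by (simp add: correct_def linear_functional_add[OF lin_i] fun_eq_iff add_divide_distrib
          distrib_right)
    have correct_scale: "correct (\<lambda>x. c * u x) = (\<lambda>x. c * correct u x)" for c u
      by (simp add: correct_def linear_functional_scale[OF lin_i] fun_eq_iff right_diff_distrib)
    have "linear_functional (\<lambda>u. \<phi> j (correct u))" if "j \<in> I" for j
    proof -
      have lin_j: "linear_functional (\<phi> j)"
        using that insert.prems(3) by simp
      show ?thesis
        unfolding linear_functional_def correct_add correct_scale
        by (simp add: linear_functional_add[OF lin_j] linear_functional_scale[OF lin_j])
    qed
    moreover have "card I < card (V - {v0})"
      using insert.hyps insert.prems(1,2) v0(1) by simp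
    ultimately obtain u where u: "\<forall>x. x \<notin> V - {v0} \<longrightarrow> u x = 0" "\<exists>v\<in>V - {v0}. u v \<noteq> 0"
      "\<forall>j\<in>I. \<phi> j (correct u) = 0"
      using insert.IH[of "V - {v0}" "\<lambda>j u. \<phi> j (correct u)"] insert.prems(1) by blast
    show ?thesis
      using u v0(1) killed by (intro exI[of _ "correct u"]) (auto simp: correct_def \<delta>_def)
  next
    case False
    have "card I < card V"
      using insert.hyps insert.prems(2) by simp
    then obtain u where u: "\<forall>x. x \<notin> V \<longrightarrow> u x = 0" "\<exists>v\<in>V. u v \<noteq> 0" "\<forall>j\<in>I. \<phi> j u = 0"
      using insert.IH[of V \<phi>] insert.prems(1,3) by blast
    have "\<phi> i u = 0"
      using linear_functional_expand[of "\<phi> i" V u] insert.prems u(1) False by simp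
    with u show ?thesis by auto
  qed
qed

lemma linear_functional_signed_adjacency_shift:
  "linear_functional (\<lambda>u. signed_adjacency u x + c * u x)"
  unfolding linear_functional_def signed_adjacency_def
  by (simp add: sum.distrib sum_distrib_left algebra_simps)


section \<open>An eigenvector supported on a large set\<close>

text \<open>The eigenvectors are \<open>A u + sqrt n u\<close> with \<open>u\<close> supported on the half cube of vertices
  with first coordinate \<open>0\<close>; requiring them to vanish on the complement of \<open>H\<close> imposes fewer
  equations than there are unknowns, and \<open>A u + sqrt n u\<close> takes the value \<open>u v\<close> at the
  vertex obtained by flipping the first coordinate of \<open>v\<close>, so it is not zero.\<close>

lemma exists_eigenvector_supported:
  assumes "H \<subseteq> cube (Suc m)" "card H > 2 ^ m"
  defines "n \<equiv> Suc m"
  shows "\<exists>w. (\<exists>x\<in>H. w x \<noteq> 0) \<and> (\<forall>x. x \<notin> H \<longrightarrow> w x = 0) \<and>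
             (\<forall>x\<in>cube n. signed_adjacency w x = sqrt (real n) * w x)"
proof -
  define L where "L = {x \<in> cube n. \<not> x ! 0}"
  define D where "D = cube n - H"
  have "card D = 2 ^ n - card H"
    using assms(1) card_Diff_subset[OF finite_subset[OF assms(1) finite_cube]]
    by (simp add: D_def n_def card_cube)
  moreover have "card H \<le> 2 ^ n"
    using card_mono[OF finite_cube assms(1)] by (simp add: n_def card_cube)
  ultimately have "card D < card L"
    using assms(2) card_cube_first_False[of m] by (simp add: L_def n_def)
  moreover have "finite D" "finite L"
    by (simp_all add: D_def L_def finite_cube)
  ultimately obtain u where u_L: "\<And>x. x \<notin> L \<Longrightarrow> u x = 0" and "\<exists>v\<in>L. u v \<noteq> 0"
    and u_D: "\<And>x. x \<in> D \<Longrightarrow> signed_adjacency u x + sqrt (real n) * u x = 0"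
    using exists_nonzero_common_zero[of D L "\<lambda>x u. signed_adjacency u x + sqrt (real n) * u x"]
      linear_functional_signed_adjacency_shift
    by blast
  then obtain v where v: "v \<in> L" "u v \<noteq> 0" by blast
  define w where "w y = signed_adjacency u y + sqrt (real n) * u y" for y
  have w_outside: "w x = 0" if "x \<notin> H" for x
  proof (cases "x \<in> cube n")
    case True
    with that u_D show ?thesis by (simp add: w_def D_def)
  next
    case False
    then show ?thesis by (simp add: w_def signed_adjacency_def u_L L_def)
  qed
  have "w (flip 0 v) = u v"
  proof -
    have v_cube: "v \<in> cube n" "0 < length v" "flip 0 v \<noteq> []" "\<not> v ! 0"
      using v(1) by (auto simp: L_def n_def cube_def simp flip: length_0_conv)
    have "signed_adjacency u (flip 0 v) = u (flip 0 (flip 0 v))"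
      by (rule signed_adjacency_first_True) (use v_cube in \<open>auto simp: nth_flip L_def intro: u_L\<close>)
    moreover have "u (flip 0 v) = 0"
      using v_cube by (intro u_L) (simp add: L_def nth_flip)
    ultimately show ?thesis
      by (simp add: w_def)
  qed
  then have "\<exists>x\<in>H. w x \<noteq> 0"
    using v(2) w_outside by metis
  moreover have "\<forall>x\<in>cube n. signed_adjacency w x = sqrt (real n) * w x"
    unfolding w_def by (auto simp: signed_adjacency_shift cube_def)
  ultimately show ?thesis
    using w_outside by blast
qed


section \<open>From the eigenvector to a vertex of high weighted degree\<close>

lemma neighbour_bound_at_weighted_max:
  fixes w :: "bool list \<Rightarrow> real"
  assumes "C > 0" "k < length b"
    and "C ^ count_list (flip k b) True * \<bar>w (flip k b)\<bar> \<le> C ^ count_list b True * \<bar>w b\<bar>"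
  shows "\<bar>w (flip k b)\<bar> \<le> (if b ! k then C else 1 / C) * \<bar>w b\<bar>"
proof (cases "b ! k")
  case True
  then have "count_list b True = Suc (count_list (flip k b) True)"
    using count_list_flip_up[of k "flip k b"] assms(2) by (simp add: nth_flip)
  then show ?thesis
    using assms True by (simp add: mult.assoc)
next
  case False
  then have "count_list (flip k b) True = Suc (count_list b True)"
    using count_list_flip_up assms(2) by blast
  then have "C * \<bar>w (flip k b)\<bar> \<le> \<bar>w b\<bar>"
    using assms by (simp add: mult.assoc)
  then show ?thesis
    using assms False by (simp add: pos_le_divide_eq mult.commute)
qed

lemma eigenvector_weighted_degree_bound:
  fixes w :: "bool list \<Rightarrow> real"
  assumes "finite H" "C > 0" "x\<^sub>0 \<in> H" "w x\<^sub>0 \<noteq> 0"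
    and vanish: "\<And>x. x \<notin> H \<Longrightarrow> w x = 0"
    and eigen: "\<And>x. x \<in> H \<Longrightarrow> signed_adjacency w x = \<mu> * w x"
  shows "\<exists>b\<in>H. \<bar>\<mu>\<bar> \<le> C * real (card {g\<in>H. up_edge g b}) + 1 / C * real (card {g\<in>H. up_edge b g})"
proof -
  define p where "p x = C ^ count_list x True * \<bar>w x\<bar>" for x
  have "Max (p ` H) \<in> p ` H"
    using assms(1,3) by (intro Max_in) auto
  then obtain b where b: "b \<in> H" "p b = Max (p ` H)"
    by auto
  have b_max: "p x \<le> p b" if "x \<in> H" for x
    unfolding b(2) using assms(1) that by (intro Max_ge) auto
  have "0 < p x\<^sub>0"
    using assms by (simp add: p_def)
  then have "w b \<noteq> 0"
    using b_max[OF \<open>x\<^sub>0 \<in> H\<close>] by (auto simp: p_def)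
  define c where "c k = (if flip k b \<in> H then if b ! k then C else 1 / C else 0)" for k
  have neighbour: "\<bar>w (flip k b)\<bar> \<le> c k * \<bar>w b\<bar>" if "k < length b" for k
    using neighbour_bound_at_weighted_max[OF \<open>C > 0\<close> that] b_max vanish
    by (auto simp: c_def p_def)
  have "\<bar>\<mu>\<bar> * \<bar>w b\<bar> = \<bar>signed_adjacency w b\<bar>"
    using eigen[OF b(1)] by (simp add: abs_mult)
  also have "\<dots> \<le> (\<Sum>k < length b. \<bar>w (flip k b)\<bar>)"
    unfolding signed_adjacency_def by (rule order_trans[OF sum_abs]) (simp add: abs_mult)
  also have "\<dots> \<le> (\<Sum>k < length b. c k * \<bar>w b\<bar>)"
    by (rule sum_mono) (simp add: neighbour)
  finally have "\<bar>\<mu>\<bar> * \<bar>w b\<bar> \<le> (\<Sum>k < length b. c k) * \<bar>w b\<bar>"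
    by (simp add: sum_distrib_right)
  then have "\<bar>\<mu>\<bar> \<le> (\<Sum>k < length b. c k)"
    using \<open>w b \<noteq> 0\<close> by simp
  also have "\<dots> = (\<Sum>k < length b. (if b ! k \<and> flip k b \<in> H then C else 0)
                              + (if \<not> b ! k \<and> flip k b \<in> H then 1 / C else 0))"
    by (intro sum.cong) (auto simp: c_def)
  also have "\<dots> = C * real (card {k. k < length b \<and> b ! k \<and> flip k b \<in> H})
                 + 1 / C * real (card {k. k < length b \<and> \<not> b ! k \<and> flip k b \<in> H})"
    by (simp add: sum.distrib sum.If_cases lessThan_def Int_def conj_commute)
  also have "\<dots> = C * real (card {g\<in>H. up_edge g b}) + 1 / C * real (card {g\<in>H. up_edge b g})"
    by (simp add: card_down_neighbours card_up_neighbours)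
  finally show ?thesis
    using b by blast
qed


theorem mainTheorem4:
  fixes n :: nat and H :: "bool list set" and C :: real
  assumes "n \<ge> 1"
    and "H \<subseteq> cube n"
    and "card H > 2 ^ (n - 1)"
    and "C > 0"
  shows "\<exists>\<beta>\<in>H. sqrt (real n) \<le>
           C * real (card {\<gamma>\<in>H. up_edge \<gamma> \<beta>}) + (1 / C) * real (card {\<gamma>\<in>H. up_edge \<beta> \<gamma>})"
proof -
  obtain m where n: "n = Suc m"
    using assms(1) by (cases n) auto
  obtain w x\<^sub>0 where "x\<^sub>0 \<in> H" "w x\<^sub>0 \<noteq> 0" "\<And>x. x \<notin> H \<Longrightarrow> w x = 0"
    and eigen: "\<And>x. x \<in> cube n \<Longrightarrow> signed_adjacency w x = sqrt (real n) * w x"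
    using exists_eigenvector_supported[of H m] assms(2,3) n by auto
  moreover have "finite H"
    using assms(2) finite_cube finite_subset by blast
  ultimately show ?thesis
    using eigenvector_weighted_degree_bound[of H C x\<^sub>0 w "sqrt (real n)"] eigen assms(2,4)
    by (auto simp: subset_iff)
qed

end
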